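(* Let $v\geq 7$ and let $C_v$ be the configuration on $\mathbb{Z}_v$ with blocks $\{m,m+1,m+3\}$, $m\in\mathbb{Z}_v$. Then its strong chromatic number is \[\chi_s(C_v)=\begin{cases}7&\text{if } v=7,\\ 6&\text{if } v=11,\\ 5&\text{if } v\equiv 1,2,3\pmod 4,\ v\notin\{7,11\},\\ 4&\text{if } v\equiv 0\pmod 4.\end{cases}\]
   Context: A strong colouring of a configuration is an assignment of colours to points such that the three points of every block receive three distinct colours; the strong chromatic number $\chi_s$ is the minimum number of colours in a strong colouring. *)

theory Defs
  imports Main
begin

definition strong_colouring :: "'a set \<Rightarrow> 'a set set \<Rightarrow> nat \<Rightarrow> ('a \<Rightarrow> nat) \<Rightarrow> bool" where
  "strong_colouring P B k c \<longleftrightarrow> (\<forall>x\<in>P. c x < k) \<and> (\<forall>b\<in>B. inj_on c b)"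

definition strong_chromatic_number :: "'a set \<Rightarrow> 'a set set \<Rightarrow> nat" where
  "strong_chromatic_number P B = (LEAST k. \<exists>c. strong_colouring P B k c)"

definition Cv_points :: "nat \<Rightarrow> nat set" where
  "Cv_points v = {..<v}"

definition Cv_blocks :: "nat \<Rightarrow> nat set set" where
  "Cv_blocks v = {{m, (m + 1) mod v, (m + 3) mod v} | m. m < v}"

end

theory Submission
  imports Defs "HOL-Number_Theory.Cong"
begin

text \<open>Two points of a colour class of a strong colouring of \<open>C\<^sub>v\<close> are never at cyclic distance
  1, 2 or 3, so the sets \<open>{x, x+1, x+2, x+3}\<close> for \<open>x\<close> in the class are pairwise disjoint and the
  class has at most \<open>v div 4\<close> points. Hence every strong \<open>k\<close>-colouring satisfies
  \<open>v \<le> k * (v div 4)\<close>, which yields all the lower bounds. For the upper bounds, write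
  \<open>v = 5a + 4b\<close> (possible for all \<open>v \<ge> 8\<close> except 11) and colour the cycle by \<open>a\<close> copies of
  the word 01234 followed by \<open>b\<close> copies of 0123; \<open>C\<^sub>7\<close> and \<open>C\<^bsub>11\<^esub>\<close> are coloured by hand.\<close>

lemma mod_eq_in_last_block:
  fixes z n q :: nat
  assumes "z < n * q" "n * q \<le> z + n"
  shows "z mod n = z + n - n * q"
proof -
  have "n \<le> n * q"
    using assms by (cases q) auto
  then have "z = (z + n - n * q) + n * (q - 1)"
    using assms by (simp add: diff_mult_distrib2)
  then have "z mod n = (z + n - n * q) mod n"
    by (metis mod_mult_self2)
  also have "\<dots> = z + n - n * q"
    using assms by simp
  finally show ?thesis .
qed

lemma add_mod_neq_mod:
  fixes x d n :: nat
  assumes "0 < d" "d < n"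
  shows "(x + d) mod n \<noteq> x mod n"
proof
  assume "(x + d) mod n = x mod n"
  then have "[d + x = 0 + x] (mod n)"
    by (simp add: cong_def add.commute)
  then have "n dvd d"
    by (simp only: cong_add_rcancel_nat cong_0_iff)
  with assms show False
    by (auto dest: dvd_imp_le)
qed

lemma strong_chromatic_number_eqI:
  assumes "\<exists>c. strong_colouring P B n c"
    and "\<And>k c. strong_colouring P B k c \<Longrightarrow> n \<le> k"
  shows "strong_chromatic_number P B = n"
  unfolding strong_chromatic_number_def using assms by (blast intro: Least_equality)

lemma strong_colouring_Cv_iff:
  assumes "4 \<le> v"
  shows "strong_colouring (Cv_points v) (Cv_blocks v) k c \<longleftrightarrow>
    (\<forall>x\<in>{..<v}. c x < k) \<and> (\<forall>x\<in>{..<v}. \<forall>d\<in>{1,2,3}. c ((x + d) mod v) \<noteq> c x)"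
proof
  assume near: "(\<forall>x\<in>{..<v}. c x < k) \<and> (\<forall>x\<in>{..<v}. \<forall>d\<in>{1,2,3}. c ((x + d) mod v) \<noteq> c x)"
  have "inj_on c {m, (m + 1) mod v, (m + 3) mod v}" if m: "m < v" for m
  proof -
    have "m + 1 + 2 = m + (3::nat)"
      by simp
    then have "((m + 1) mod v + 2) mod v = (m + 3) mod v"
      by (metis mod_add_left_eq)
    moreover have "(m + 1) mod v < v"
      using m by simp
    ultimately have "c ((m + 3) mod v) \<noteq> c ((m + 1) mod v)"
      using near by (metis insertCI lessThan_iff)
    moreover have "c ((m + 1) mod v) \<noteq> c m" "c ((m + 3) mod v) \<noteq> c m"
      using near m by auto
    ultimately show ?thesis
      by (auto simp: inj_on_def)
  qed
  then show "strong_colouring (Cv_points v) (Cv_blocks v) k c"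
    using near by (auto simp: strong_colouring_def Cv_points_def Cv_blocks_def)
next
  assume strong: "strong_colouring (Cv_points v) (Cv_blocks v) k c"
  have block: "inj_on c {m, (m + 1) mod v, (m + 3) mod v}" if "m < v" for m
    using strong that unfolding strong_colouring_def Cv_blocks_def by blast
  have moves: "(x + d) mod v \<noteq> x" if "x < v" "d \<in> {1,2,3}" for x d
    using that \<open>4 \<le> v\<close> add_mod_neq_mod[of d v x] by fastforce
  have "c ((x + d) mod v) \<noteq> c x" if x: "x < v" and d: "d \<in> {1,2,3}" for x d
  proof (cases "d = 2")
    case True
    \<comment> \<open>the pair at distance 2 lies in the block starting one step before x\<close>
    define m where "m = (x + v - 1) mod v"
    have "(m + 1) mod v = (x + v - 1 + 1) mod v"
      unfolding m_def by (rule mod_add_left_eq)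
    also have "\<dots> = x"
      using x by simp
    finally have m1: "(m + 1) mod v = x" .
    have "(m + 3) mod v = (x + v - 1 + 3) mod v"
      unfolding m_def by (rule mod_add_left_eq)
    also have "x + v - 1 + 3 = (x + 2) + v"
      using x by simp
    also have "((x + 2) + v) mod v = (x + 2) mod v"
      by (rule mod_add_self2)
    finally have m3: "(m + 3) mod v = (x + 2) mod v" .
    have "m < v"
      using x by (simp add: m_def)
    then show ?thesis
      using block[of m] m1 m3 moves[OF x d] True by (auto dest: inj_onD)
  next
    case False
    then have "d = 1 \<or> d = 3"
      using d by auto
    then show ?thesis
      using inj_onD[OF block[OF x], of "(x + d) mod v" x] moves[OF x d] by auto
  qed
  then show "(\<forall>x\<in>{..<v}. c x < k) \<and> (\<forall>x\<in>{..<v}. \<forall>d\<in>{1,2,3}. c ((x + d) mod v) \<noteq> c x)"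
    using strong by (auto simp: strong_colouring_def Cv_points_def)
qed

lemma card_cyclic_sparse_le:
  fixes S :: "nat set"
  assumes S: "S \<subseteq> {..<v}"
    and sparse: "\<And>x d. x \<in> S \<Longrightarrow> d \<in> {1,2,3} \<Longrightarrow> (x + d) mod v \<notin> S"
  shows "4 * card S \<le> v"
proof -
  have no_collision: "x = y \<and> i = j"
    if "x \<in> S" "y \<in> S" "i < 4" "j \<le> i" "(x + i) mod v = (y + j) mod v" for x y i j
  proof -
    have "[x + (i - j) + j = y + j] (mod v)"
      using that by (simp add: cong_def)
    then have "[x + (i - j) = y] (mod v)"
      by (simp only: cong_add_rcancel_nat)
    then have "(x + (i - j)) mod v = y"
      using that S by (auto simp: cong_def)
    moreover have "i - j \<notin> {1,2,3}"
      using sparse \<open>x \<in> S\<close> \<open>y \<in> S\<close> calculation by blast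
    ultimately show ?thesis
      using that S by auto
  qed
  have "inj_on (\<lambda>(x, i). (x + i) mod v) (S \<times> {..<4})"
  proof (rule inj_onI, clarsimp)
    fix x i y j
    assume "x \<in> S" "i < (4::nat)" "y \<in> S" "j < (4::nat)" "(x + i) mod v = (y + j) mod v"
    then show "x = y \<and> i = j"
      using no_collision[of x y i j] no_collision[of y x j i] by (cases "j \<le> i") auto
  qed
  moreover have "(\<lambda>(x, i). (x + i) mod v) ` (S \<times> {..<4}) \<subseteq> {..<v}"
    using S by auto
  ultimately have "card (S \<times> {..<4::nat}) \<le> card {..<v}"
    by (intro card_inj_on_le) auto
  then show ?thesis
    by (simp add: card_cartesian_product)
qed

lemma four_le_if_le_mult_div_4:
  fixes v k :: nat
  assumes "0 < v" "v \<le> k * (v div 4)"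
  shows "4 \<le> k"
proof (rule ccontr)
  assume "\<not> 4 \<le> k"
  then have "k * (v div 4) \<le> 3 * (v div 4)"
    by simp
  moreover have "3 * (v div 4) < v"
    using \<open>0 < v\<close> by linarith
  ultimately show False
    using assms by linarith
qed

lemma five_le_if_le_mult_div_4:
  fixes v k :: nat
  assumes "v mod 4 \<noteq> 0" "v \<le> k * (v div 4)"
  shows "5 \<le> k"
proof (rule ccontr)
  assume "\<not> 5 \<le> k"
  then have "k * (v div 4) \<le> 4 * (v div 4)"
    by simp
  moreover have "4 * (v div 4) < v"
    using \<open>v mod 4 \<noteq> 0\<close> div_mult_mod_eq[of v 4] by linarith
  ultimately show False
    using assms by linarith
qed

lemma strong_colouring_Cv_card_le:
  assumes "4 \<le> v" and strong: "strong_colouring (Cv_points v) (Cv_blocks v) k c"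
  shows "v \<le> k * (v div 4)"
proof -
  let ?class = "\<lambda>i. {x \<in> {..<v}. c x = i}"
  have near: "\<forall>x\<in>{..<v}. c x < k" "\<forall>x\<in>{..<v}. \<forall>d\<in>{1,2,3}. c ((x + d) mod v) \<noteq> c x"
    using strong strong_colouring_Cv_iff[OF \<open>4 \<le> v\<close>] by blast+
  have "4 * card (?class i) \<le> v" for i
    by (rule card_cyclic_sparse_le) (use near in auto)
  then have class_le: "card (?class i) \<le> v div 4" for i
    by (simp add: less_eq_div_iff_mult_less_eq mult.commute)
  have "{..<v} = (\<Union>i<k. ?class i)"
    using near by auto
  then have "v = card (\<Union>i<k. ?class i)"
    by (metis card_lessThan)
  also have "\<dots> \<le> (\<Sum>i<k. card (?class i))"
    by (rule card_UN_le) simp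
  also have "\<dots> \<le> k * (v div 4)"
    using sum_bounded_above[of "{..<k}" "\<lambda>i. card (?class i)" "v div 4"] class_le by simp
  finally show ?thesis .
qed

definition word_colouring :: "nat \<Rightarrow> nat \<Rightarrow> nat" where
  "word_colouring a x = (if x < 5 * a then x mod 5 else (x - 5 * a) mod 4)"

lemma word_colouring_less_4 [simp]: "x < 4 \<Longrightarrow> word_colouring a x = x"
  by (cases a) (auto simp: word_colouring_def)

lemma word_colouring_steps:
  assumes v: "v = 5 * a + 4 * b" and x: "x < v" and d: "d \<in> {1,2,3}"
  shows "word_colouring a ((x + d) mod v) \<noteq> word_colouring a x"
proof (cases "x + d < v")
  case True
  then have "(x + d) mod v = x + d"
    by simp
  moreover have "word_colouring a (x + d) \<noteq> word_colouring a x"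
  proof -
    consider "x + d < 5 * a" | "5 * a \<le> x" | "x < 5 * a" "5 * a \<le> x + d"
      by linarith
    then show ?thesis
    proof cases
      case 1
      have "(x + d) mod 5 \<noteq> x mod 5"
        using d by (intro add_mod_neq_mod) auto
      with 1 show ?thesis
        by (simp add: word_colouring_def)
    next
      case 2
      have "(x - 5 * a + d) mod 4 \<noteq> (x - 5 * a) mod 4"
        using d by (intro add_mod_neq_mod) auto
      with 2 show ?thesis
        by (simp add: word_colouring_def)
    next
      case 3
      \<comment> \<open>x ends the last 5-word and x + d lies at the start of the first 4-word\<close>
      have "x mod 5 = x + 5 - 5 * a"
        using 3 d by (intro mod_eq_in_last_block) auto
      with 3 d show ?thesis
        by (auto simp: word_colouring_def)
    qed
  qed
  ultimately show ?thesis
    by simp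
next
  case False
  \<comment> \<open>x lies in the last word, of length 4 or 5, and the step wraps to one of 0, 1, 2\<close>
  have "4 \<le> v"
    using v x by presburger
  then have wrap: "(x + d) mod v = x + d - v"
    using False x d by (auto simp: le_mod_geq)
  have "word_colouring a x = x + 5 - v \<or> word_colouring a x = x + 4 - v"
  proof (cases b)
    case 0
    then have "x mod 5 = x + 5 - 5 * a"
      using False x d v by (intro mod_eq_in_last_block) auto
    with 0 show ?thesis
      using v x by (simp add: word_colouring_def)
  next
    case (Suc b')
    then have "(x - 5 * a) mod 4 = x - 5 * a + 4 - 4 * b"
      using False x d v by (intro mod_eq_in_last_block) auto
    with Suc show ?thesis
      using v x False d by (auto simp: word_colouring_def)
  qed
  moreover have "word_colouring a (x + d - v) = x + d - v"
    using x d by (intro word_colouring_less_4) auto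
  ultimately show ?thesis
    using wrap False d by auto
qed

lemma strong_colouring_Cv_word_colouring:
  assumes "v = 5 * a + 4 * b" "0 < v" and "\<forall>x<v. word_colouring a x < k"
  shows "strong_colouring (Cv_points v) (Cv_blocks v) k (word_colouring a)"
proof -
  have "4 \<le> v"
    using assms(1,2) by presburger
  then show ?thesis
    using assms word_colouring_steps by (simp add: strong_colouring_Cv_iff)
qed

lemma strong_colouring_C7: "strong_colouring (Cv_points 7) (Cv_blocks 7) 7 id"
  by (simp add: strong_colouring_Cv_iff lessThan_nat_numeral)

lemma strong_colouring_C11:
  "strong_colouring (Cv_points 11) (Cv_blocks 11) 6 (\<lambda>x. if x = 10 then 5 else x mod 5)"
  by (simp add: strong_colouring_Cv_iff lessThan_nat_numeral)

lemma sum_of_fives_and_fours: "8 \<le> v \<Longrightarrow> v \<noteq> 11 \<Longrightarrow> \<exists>a b. v = 5 * a + 4 * b"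
  for v :: nat
  by presburger

theorem mainTheorem16:
  fixes v :: nat
  assumes "v \<ge> 7"
  shows "strong_chromatic_number (Cv_points v) (Cv_blocks v) =
           (if v = 7 then 7
            else if v = 11 then 6
            else if v mod 4 = 0 then 4
            else 5)"
proof -
  have lower: "v \<le> k * (v div 4)" if "strong_colouring (Cv_points v) (Cv_blocks v) k c" for k c
    using assms that by (intro strong_colouring_Cv_card_le) auto
  consider "v = 7" | "v = 11" | "v \<noteq> 7" "v \<noteq> 11" "v mod 4 = 0" | "v \<noteq> 7" "v \<noteq> 11" "v mod 4 \<noteq> 0"
    by blast
  then show ?thesis
  proof cases
    case 1
    then show ?thesis
      using strong_colouring_C7 lower by (auto intro!: strong_chromatic_number_eqI)
  next
    case 2
    then show ?thesis
      using strong_colouring_C11 lower by (fastforce intro!: strong_chromatic_number_eqI)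
  next
    case 3
    then have "strong_colouring (Cv_points v) (Cv_blocks v) 4 (word_colouring 0)"
      using assms by (intro strong_colouring_Cv_word_colouring[of v 0 "v div 4"]) (auto simp: word_colouring_def)
    moreover have "4 \<le> k" if "strong_colouring (Cv_points v) (Cv_blocks v) k c" for k c
      using four_le_if_le_mult_div_4[OF _ lower[OF that]] assms by simp
    ultimately show ?thesis
      using 3 by (auto intro!: strong_chromatic_number_eqI)
  next
    case 4
    then obtain a b where "v = 5 * a + 4 * b"
      using assms sum_of_fives_and_fours by fastforce
    then have "strong_colouring (Cv_points v) (Cv_blocks v) 5 (word_colouring a)"
      using assms by (intro strong_colouring_Cv_word_colouring) (auto simp: word_colouring_def)
    with 4 show ?thesis
      using lower by (auto intro!: strong_chromatic_number_eqI five_le_if_le_mult_div_4)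
  qed
qed

end
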